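(* Let $M$ be the statistical manifold of the beta-logistic distributions $$p(x;\theta^1,\theta^2)=\frac{2^{1-\theta^1}\operatorname{sech}^{\theta^1}(x)\,e^{\theta^2x}}{B\left(\frac{\theta^1-\theta^2}{2},\frac{\theta^1+\theta^2}{2}\right)},\qquad x\in\mathbb{R},\quad (\theta^1,\theta^2)\in\Theta=\{\theta^1\pm\theta^2>0\}.$$ Write $a=\frac{\theta^1-\theta^2}{2}$, $b=\frac{\theta^1+\theta^2}{2}$, $p=\psi'(a)$, $q=\psi'(b)$, $r=\psi'(\theta^1)$, $s=\psi''(a)$, $u=\psi''(b)$, $v=\psi''(\theta^1)$, and set $$\mathcal{G}=pq-r(p+q),\qquad N=rsu-v(qs+pu).$$ Then for every $\alpha\in\mathbb{R}$: (1) the $\alpha$-connection coefficients are $$\Gamma^{(\alpha)}_{111}=\tfrac{1-\alpha}{16}\,(u+s-8v),\qquad \Gamma^{(\alpha)}_{121}=\Gamma^{(\alpha)}_{112}=\Gamma^{(\alpha)}_{211}=\Gamma^{(\alpha)}_{222}=\tfrac{1-\alpha}{16}\,(u-s),$$ $$\Gamma^{(\alpha)}_{122}=\Gamma^{(\alpha)}_{212}=\Gamma^{(\alpha)}_{221}=\tfrac{1-\alpha}{16}\,(u+s);$$ (2) the components $R^{(\alpha)}_{ijkl}$ of the $\alpha$-curvature tensor with $i=j$ or $k=l$ vanish, and $$R^{(\alpha)}_{1212}=R^{(\alpha)}_{2121}=-R^{(\alpha)}_{1221}=-R^{(\alpha)}_{2112}=\frac{(1-\alpha^2)\,N}{16\,\mathcal{G}};$$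 (3) the $\alpha$-Ricci curvature components are $$R^{(\alpha)}_{11}=\frac{(1-\alpha^2)(p+q-4r)\,N}{16\,\mathcal{G}^2},\quad R^{(\alpha)}_{12}=R^{(\alpha)}_{21}=-\frac{(1-\alpha^2)(p-q)\,N}{16\,\mathcal{G}^2},\quad R^{(\alpha)}_{22}=\frac{(1-\alpha^2)(p+q)\,N}{16\,\mathcal{G}^2};$$ (4) the $\alpha$-scalar curvature is $R^{(\alpha)}=8R^{(\alpha)}_{1212}/\mathcal{G}$, which equals $2K^{(\alpha)}$ where $K^{(\alpha)}=R^{(\alpha)}_{1212}/\det G$.
   Context: $B$ is the beta function, $\psi=\Gamma'/\Gamma$ the digamma function, $\psi',\psi''$ its first and second derivatives. Let $l=\ln p(x;\theta)$, $\partial_i=\partial/\partial\theta^i$. The Fisher metric is $g_{ij}=\mathbb{E}[\partial_il\,\partial_jl]$, $G=(g_{ij})$, $(g^{ij})=G^{-1}$; $T_{ijk}=\mathbb{E}[\partial_il\,\partial_jl\,\partial_kl]$. The Levi-Civita coefficients are $\Gamma_{ijk}=\frac12(\partial_ig_{jk}+\partial_jg_{ki}-\partial_kg_{ij})$, the $\alpha$-connection coefficients are $\Gamma^{(\alpha)}_{ijk}=\Gamma_{ijk}-\frac{\alpha}{2}T_{ijk}$, and $\Gamma^{(\alpha)k}_{ij}=\Gamma^{(\alpha)}_{ijs}g^{sk}$ (summation convention), defining the connection $\nabla^{(\alpha)}_{\partial_i}\partial_j=\Gamma^{(\alpha)k}_{ij}\partial_k$. The $\alpha$-curvature tensor is $R^{(\alpha)}_{ijkl}=g\big(R^{(\alpha)}(\partial_i,\partial_j)\partial_k,\partial_l\big)$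 with $R^{(\alpha)}(X,Y)=\nabla^{(\alpha)}_X\nabla^{(\alpha)}_Y-\nabla^{(\alpha)}_Y\nabla^{(\alpha)}_X-\nabla^{(\alpha)}_{[X,Y]}$ (for this family it equals $\frac{1-\alpha^2}{4}g^{mn}(T_{kmi}T_{jln}-T_{kmj}T_{iln})$). The $\alpha$-Ricci curvature is $R^{(\alpha)}_{ik}=R^{(\alpha)}_{ijkl}g^{jl}$ and the $\alpha$-scalar curvature is $R^{(\alpha)}=R^{(\alpha)}_{ij}g^{ij}$. *)

theory Defs
  imports "HOL-Analysis.Analysis"
begin

definition idx :: "nat set" where "idx = {1, 2}"

definition comp :: "nat \<Rightarrow> real \<times> real \<Rightarrow> real" where
  "comp i \<theta> = (if i = 1 then fst \<theta> else snd \<theta>)"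

definition upd :: "nat \<Rightarrow> real \<Rightarrow> real \<times> real \<Rightarrow> real \<times> real" where
  "upd i t \<theta> = (if i = 1 then (t, snd \<theta>) else (fst \<theta>, t))"

definition pd :: "nat \<Rightarrow> (real \<times> real \<Rightarrow> real) \<Rightarrow> real \<times> real \<Rightarrow> real" where
  "pd i f \<theta> = deriv (\<lambda>t. f (upd i t \<theta>)) (comp i \<theta>)"

definition Theta :: "(real \<times> real) set" where
  "Theta = {\<theta>. fst \<theta> - snd \<theta> > 0 \<and> fst \<theta> + snd \<theta> > 0}"

definition sech :: "real \<Rightarrow> real" where "sech x = 1 / cosh x"

definition dens :: "real \<times> real \<Rightarrow> real \<Rightarrow> real" where
  "dens \<theta> x = 2 powr (1 - fst \<theta>) * sech x powr (fst \<theta>) * exp (snd \<theta> * x)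
     / Beta ((fst \<theta> - snd \<theta>) / 2) ((fst \<theta> + snd \<theta>) / 2)"

definition loglik :: "real \<times> real \<Rightarrow> real \<Rightarrow> real" where
  "loglik \<theta> x = ln (dens \<theta> x)"

definition score :: "nat \<Rightarrow> real \<times> real \<Rightarrow> real \<Rightarrow> real" where
  "score i \<theta> x = pd i (\<lambda>\<eta>. loglik \<eta> x) \<theta>"

definition fisher :: "nat \<Rightarrow> nat \<Rightarrow> real \<times> real \<Rightarrow> real" where
  "fisher i j \<theta> = (\<integral>x. score i \<theta> x * score j \<theta> x * dens \<theta> x \<partial>lborel)"

definition skew :: "nat \<Rightarrow> nat \<Rightarrow> nat \<Rightarrow> real \<times> real \<Rightarrow> real" where
  "skew i j k \<theta> = (\<integral>x. score i \<theta> x * score j \<theta> x * score k \<theta> x * dens \<theta> x \<partial>lborel)"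

definition fisher_det :: "real \<times> real \<Rightarrow> real" where
  "fisher_det \<theta> = fisher 1 1 \<theta> * fisher 2 2 \<theta> - fisher 1 2 \<theta> * fisher 2 1 \<theta>"

definition fisher_inv :: "nat \<Rightarrow> nat \<Rightarrow> real \<times> real \<Rightarrow> real" where
  "fisher_inv i j \<theta> =
     (if i = 1 \<and> j = 1 then fisher 2 2 \<theta>
      else if i = 2 \<and> j = 2 then fisher 1 1 \<theta>
      else - fisher i j \<theta>) / fisher_det \<theta>"

definition LC :: "nat \<Rightarrow> nat \<Rightarrow> nat \<Rightarrow> real \<times> real \<Rightarrow> real" where
  "LC i j k \<theta> = (pd i (fisher j k) \<theta> + pd j (fisher k i) \<theta> - pd k (fisher i j) \<theta>) / 2"

definition conn :: "real \<Rightarrow> nat \<Rightarrow> nat \<Rightarrow> nat \<Rightarrow> real \<times> real \<Rightarrow> real" where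
  "conn \<alpha> i j k \<theta> = LC i j k \<theta> - \<alpha> / 2 * skew i j k \<theta>"

definition conn_up :: "real \<Rightarrow> nat \<Rightarrow> nat \<Rightarrow> nat \<Rightarrow> real \<times> real \<Rightarrow> real" where
  "conn_up \<alpha> i j k \<theta> = (\<Sum>s\<in>idx. conn \<alpha> i j s \<theta> * fisher_inv s k \<theta>)"

text \<open>Component n of R(d_i,d_j)d_k = nabla_i nabla_j d_k - nabla_j nabla_i d_k
  (coordinate fields commute), where nabla_i d_j = Gamma^m_ij d_m.\<close>
definition curv_up :: "real \<Rightarrow> nat \<Rightarrow> nat \<Rightarrow> nat \<Rightarrow> nat \<Rightarrow> real \<times> real \<Rightarrow> real" where
  "curv_up \<alpha> i j k n \<theta> =
     pd i (conn_up \<alpha> j k n) \<theta> - pd j (conn_up \<alpha> i k n) \<theta>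
     + (\<Sum>m\<in>idx. conn_up \<alpha> j k m \<theta> * conn_up \<alpha> i m n \<theta>
                 - conn_up \<alpha> i k m \<theta> * conn_up \<alpha> j m n \<theta>)"

definition curv :: "real \<Rightarrow> nat \<Rightarrow> nat \<Rightarrow> nat \<Rightarrow> nat \<Rightarrow> real \<times> real \<Rightarrow> real" where
  "curv \<alpha> i j k l \<theta> = (\<Sum>n\<in>idx. curv_up \<alpha> i j k n \<theta> * fisher n l \<theta>)"

definition ricci :: "real \<Rightarrow> nat \<Rightarrow> nat \<Rightarrow> real \<times> real \<Rightarrow> real" where
  "ricci \<alpha> i k \<theta> = (\<Sum>j\<in>idx. \<Sum>l\<in>idx. curv \<alpha> i j k l \<theta> * fisher_inv j l \<theta>)"

definition scalar_curv :: "real \<Rightarrow> real \<times> real \<Rightarrow> real" where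
  "scalar_curv \<alpha> \<theta> = (\<Sum>i\<in>idx. \<Sum>j\<in>idx. ricci \<alpha> i j \<theta> * fisher_inv i j \<theta>)"

end

theory Submission
  imports Defs "HOL-Real_Asymp.Real_Asymp"
begin

text \<open>Since \<open>sech x powr \<theta>\<^sub>1 * exp (\<theta>\<^sub>2 x) = exp (\<theta>\<^sub>1 ln (sech x) + \<theta>\<^sub>2 x)\<close>, the beta-logistic
  family is an exponential family with sufficient statistic \<open>T x = (ln (sech x), x)\<close> and
  log-partition function \<open>\<psi> \<theta> = (\<theta>\<^sub>1 - 1) ln 2 + ln \<Gamma> a + ln \<Gamma> b - ln \<Gamma> \<theta>\<^sub>1\<close>; the normalising
  integral becomes Euler's Beta integral under the substitution \<open>x = (ln t - ln (1 - t)) / 2\<close>.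
  Differentiating under the integral sign, the raw moments of \<open>T\<close> are derivatives of \<open>exp \<psi>\<close>, so the
  Fisher metric and the skewness tensor are the second and third cumulants, i.e. the second and third
  partial derivatives of \<open>\<psi>\<close>, and the \<open>\<alpha>\<close>-connection coefficients are \<open>(1 - \<alpha>) / 2\<close> times the
  third derivatives.  The metric is non-degenerate because no non-trivial combination of the
  components of \<open>T\<close> is constant.  As \<open>a\<close> and \<open>b\<close> are affine in \<open>\<theta>\<close>, every derivative of \<open>\<psi>\<close> is a
  combination of polygamma values at \<open>a\<close>, \<open>b\<close> and \<open>\<theta>\<^sub>1\<close>, and so are the curvature components.  In
  dimension two everything is governed by \<open>R\<^sub>1\<^sub>2\<^sub>1\<^sub>2\<close>: the Ricci tensor is \<open>R\<^sub>1\<^sub>2\<^sub>1\<^sub>2 / det G\<close> times the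
  metric.\<close>

section \<open>The log-partition function\<close>

definition beta_a :: "real \<times> real \<Rightarrow> real" where
  "beta_a \<theta> = (fst \<theta> - snd \<theta>) / 2"

definition beta_b :: "real \<times> real \<Rightarrow> real" where
  "beta_b \<theta> = (fst \<theta> + snd \<theta>) / 2"

definition d_beta_a :: "nat \<Rightarrow> real" where
  "d_beta_a i = (if i = 1 then 1 / 2 else - 1 / 2)"

definition d_beta_b :: "nat \<Rightarrow> real" where
  "d_beta_b i = 1 / 2"

definition d_fst :: "nat \<Rightarrow> real" where
  "d_fst i = (if i = 1 then 1 else 0)"

lemma idx_cases: "i \<in> idx \<Longrightarrow> i = 1 \<or> i = 2"
  by (auto simp: idx_def)

lemma mem_idx [simp]: "i \<in> idx \<longleftrightarrow> i = 1 \<or> i = 2"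
  by (simp add: idx_def)

lemma one_in_idx: "1 \<in> idx" and two_in_idx: "2 \<in> idx"
  by simp_all

lemma Theta_pos: "\<theta> \<in> Theta \<Longrightarrow> 0 < beta_a \<theta> \<and> 0 < beta_b \<theta> \<and> 0 < fst \<theta>"
  unfolding Theta_def beta_a_def beta_b_def by auto

lemma open_Theta_line: "open {t. upd l t \<theta> \<in> Theta}"
  unfolding upd_def Theta_def
  by (cases "l = 1"; simp; intro open_Collect_conj open_Collect_less continuous_intros)

lemma upd_comp [simp]: "upd l (comp l \<theta>) \<theta> = \<theta>"
  unfolding upd_def comp_def by auto

lemma coords_upd:
  assumes "l \<in> idx"
  shows "beta_a (upd l t \<theta>) = beta_a \<theta> + d_beta_a l * (t - comp l \<theta>)"
    and "beta_b (upd l t \<theta>) = beta_b \<theta> + d_beta_b l * (t - comp l \<theta>)"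
    and "fst (upd l t \<theta>) = fst \<theta> + d_fst l * (t - comp l \<theta>)"
  using idx_cases[OF assms]
  by (auto simp: upd_def comp_def beta_a_def beta_b_def d_beta_a_def d_beta_b_def d_fst_def
      field_simps)

lemma pd_eqI:
  assumes "\<theta> \<in> Theta" and "\<And>\<eta>. \<eta> \<in> Theta \<Longrightarrow> F \<eta> = H \<eta>"
    and "((\<lambda>t. H (upd l t \<theta>)) has_real_derivative X) (at (comp l \<theta>))"
  shows "pd l F \<theta> = X"
proof -
  have "((\<lambda>t. F (upd l t \<theta>)) has_real_derivative X) (at (comp l \<theta>))"
    by (rule has_field_derivative_transform_within_open[OF assms(3) open_Theta_line[of l \<theta>]])
      (use assms in auto)
  then show ?thesis
    unfolding pd_def by (rule DERIV_imp_deriv)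
qed

definition log_partition :: "real \<times> real \<Rightarrow> real" where
  "log_partition \<theta> =
     (fst \<theta> - 1) * ln 2 + ln_Gamma (beta_a \<theta>) + ln_Gamma (beta_b \<theta>) - ln_Gamma (fst \<theta>)"

text \<open>For \<open>length is \<ge> 2\<close> this is the partial derivative of \<open>log_partition\<close> along the
  indices \<open>is\<close>; a first derivative also picks up the linear term \<open>(\<theta>\<^sup>1 - 1) ln 2\<close>, which is
  accounted for in \<open>lp_grad\<close>.\<close>
definition lp_deriv :: "nat list \<Rightarrow> real \<times> real \<Rightarrow> real" where
  "lp_deriv is \<theta> =
       Polygamma (length is - 1) (beta_a \<theta>) * (\<Prod>i\<leftarrow>is. d_beta_a i)
     + Polygamma (length is - 1) (beta_b \<theta>) * (\<Prod>i\<leftarrow>is. d_beta_b i)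
     - Polygamma (length is - 1) (fst \<theta>) * (\<Prod>i\<leftarrow>is. d_fst i)"

definition lp_grad :: "nat \<Rightarrow> real \<times> real \<Rightarrow> real" where
  "lp_grad i \<theta> = lp_deriv [i] \<theta> + ln 2 * d_fst i"

lemma lp_deriv_perm:
  assumes "mset is = mset js"
  shows "lp_deriv is \<theta> = lp_deriv js \<theta>"
proof -
  have "prod_list (map f is) = prod_list (map f js)" for f :: "nat \<Rightarrow> real"
    by (metis assms mset_map prod_mset_prod_list)
  moreover have "length is = length js"
    using assms by (rule mset_eq_length)
  ultimately show ?thesis
    unfolding lp_deriv_def by simp
qed

lemma pos_not_nonpos_Ints: "0 < x \<Longrightarrow> (x::real) \<notin> \<int>\<^sub>\<le>\<^sub>0"
  by (auto elim!: nonpos_Ints_cases)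

lemma pos_not_nonpos_Reals: "0 < x \<Longrightarrow> (x::real) \<notin> \<real>\<^sub>\<le>\<^sub>0"
  by (auto simp: nonpos_Reals_def)

lemma log_partition_has_derivative:
  assumes "\<theta> \<in> Theta" and "l \<in> idx"
  shows "((\<lambda>t. log_partition (upd l t \<theta>)) has_real_derivative lp_grad l \<theta>) (at (comp l \<theta>))"
  using Theta_pos[OF assms(1)]
  unfolding log_partition_def coords_upd[OF assms(2)]
  by (auto intro!: derivative_eq_intros pos_not_nonpos_Reals
      simp: lp_grad_def lp_deriv_def algebra_simps)

lemma lp_deriv_has_derivative:
  assumes "\<theta> \<in> Theta" and "l \<in> idx" and "is \<noteq> []"
  shows "((\<lambda>t. lp_deriv is (upd l t \<theta>)) has_real_derivative lp_deriv (l # is) \<theta>) (at (comp l \<theta>))"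
proof -
  obtain n where n: "length is = Suc n"
    using assms(3) by (cases "is") auto
  show ?thesis
    using Theta_pos[OF assms(1)]
    unfolding lp_deriv_def coords_upd[OF assms(2)]
    by (auto intro!: derivative_eq_intros pos_not_nonpos_Ints simp: n algebra_simps)
qed

definition partition_function :: "real \<times> real \<Rightarrow> real" where
  "partition_function \<theta> = exp (log_partition \<theta>)"

lemma partition_function_has_derivative:
  assumes "\<theta> \<in> Theta" and "l \<in> idx"
  shows "((\<lambda>t. partition_function (upd l t \<theta>)) has_real_derivative partition_function \<theta> * lp_grad l \<theta>)
    (at (comp l \<theta>))"
  unfolding partition_function_def
  using DERIV_chain2[OF DERIV_exp log_partition_has_derivative[OF assms]] by (simp add: mult.commute)

lemma lp_grad_has_derivative:
  assumes "\<theta> \<in> Theta" and "l \<in> idx"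
  shows "((\<lambda>t. lp_grad i (upd l t \<theta>)) has_real_derivative lp_deriv [l, i] \<theta>) (at (comp l \<theta>))"
  unfolding lp_grad_def
  using DERIV_add[OF lp_deriv_has_derivative[OF assms, of "[i]"] DERIV_const] by simp

section \<open>The beta-logistic family as an exponential family\<close>

definition log_sech :: "real \<Rightarrow> real" where
  "log_sech x = - ln (cosh x)"

definition suff_stat :: "nat \<Rightarrow> real \<Rightarrow> real" where
  "suff_stat i x = (if i = 1 then log_sech x else x)"

definition stat_pairing :: "real \<times> real \<Rightarrow> real \<Rightarrow> real" where
  "stat_pairing \<theta> x = fst \<theta> * log_sech x + snd \<theta> * x"

lemma log_sech_measurable [measurable]: "log_sech \<in> borel_measurable borel"
  unfolding log_sech_def
  by (intro borel_measurable_continuous_onI continuous_intros) (auto simp: cosh_real_pos)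

lemma continuous_on_log_sech [continuous_intros]:
  "continuous_on S f \<Longrightarrow> continuous_on S (\<lambda>x. log_sech (f x))"
  unfolding log_sech_def by (intro continuous_intros) (auto simp: cosh_real_pos)

lemma stat_pairing_upd:
  "l \<in> idx \<Longrightarrow> stat_pairing (upd l t \<theta>) x = stat_pairing \<theta> x + (t - comp l \<theta>) * suff_stat l x"
  by (auto dest: idx_cases simp: stat_pairing_def upd_def comp_def suff_stat_def algebra_simps)

lemma dens_eq:
  assumes "\<theta> \<in> Theta"
  shows "dens \<theta> x = exp (stat_pairing \<theta> x) / partition_function \<theta>"
proof -
  have pos: "0 < beta_a \<theta>" "0 < beta_b \<theta>" "0 < fst \<theta>"
    using Theta_pos[OF assms] by auto
  have "beta_a \<theta> + beta_b \<theta> = fst \<theta>"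
    by (simp add: beta_a_def beta_b_def field_simps)
  then have "Beta (beta_a \<theta>) (beta_b \<theta>)
      = exp (ln_Gamma (beta_a \<theta>) + ln_Gamma (beta_b \<theta>) - ln_Gamma (fst \<theta>))"
    using pos by (simp add: Beta_def Gamma_real_pos_exp exp_add exp_diff)
  moreover have "sech x powr fst \<theta> = exp (fst \<theta> * log_sech x)"
    by (simp add: sech_def log_sech_def powr_def ln_div cosh_real_pos)
  ultimately show ?thesis
    unfolding dens_def partition_function_def log_partition_def stat_pairing_def
      beta_a_def[symmetric] beta_b_def[symmetric]
    by (simp add: powr_def exp_add[symmetric] exp_diff[symmetric] algebra_simps)
qed

lemma loglik_eq: "\<theta> \<in> Theta \<Longrightarrow> loglik \<theta> x = stat_pairing \<theta> x - log_partition \<theta>"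
  unfolding loglik_def by (simp add: dens_eq partition_function_def exp_diff[symmetric])

lemma score_eq:
  assumes "\<theta> \<in> Theta" and "i \<in> idx"
  shows "score i \<theta> x = suff_stat i x - lp_grad i \<theta>"
  unfolding score_def
proof (rule pd_eqI[OF assms(1) loglik_eq])
  show "((\<lambda>t. stat_pairing (upd i t \<theta>) x - log_partition (upd i t \<theta>)) has_real_derivative
      suff_stat i x - lp_grad i \<theta>) (at (comp i \<theta>))"
    unfolding stat_pairing_upd[OF assms(2)]
    by (auto intro!: derivative_eq_intros log_partition_has_derivative assms)
qed

lemma exp_stat_pairing_logit:
  assumes t: "0 < t" "t < 1"
  shows "exp (stat_pairing \<theta> ((ln t - ln (1 - t)) / 2)) / (2 * t * (1 - t))
       = exp ((fst \<theta> - 1) * ln 2) * (t powr (beta_b \<theta> - 1) * (1 - t) powr (beta_a \<theta> - 1))"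
proof -
  define h where "h = (ln t - ln (1 - t)) / 2"
  have "2 * h = ln t - ln (1 - t)"
    by (simp add: h_def)
  then have e2h: "exp (2 * h) = t / (1 - t)"
    using t by (simp add: exp_diff)
  have "cosh h = exp (- h) * (exp (2 * h) + 1) / 2"
    by (simp add: cosh_def distrib_left mult_exp_exp)
  also have "\<dots> = exp (- h) / (2 * (1 - t))"
    unfolding e2h using t by (simp add: field_simps)
  finally have "ln (cosh h) = ln (exp (- h)) - ln (2 * (1 - t))"
    using t by (simp only: ln_div exp_gt_zero) simp
  also have "\<dots> = - h - ln 2 - ln (1 - t)"
    using t by (subst ln_mult) auto
  finally have lc: "ln (cosh h) = - h - ln 2 - ln (1 - t)" .
  have lh: "1 / (2 * t * (1 - t)) = exp (- ln 2 - ln t - ln (1 - t))"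
    using t by (simp add: exp_diff exp_minus inverse_eq_divide)
  have "exp (stat_pairing \<theta> h) * (1 / (2 * t * (1 - t)))
      = exp (fst \<theta> * (h + ln 2 + ln (1 - t)) + snd \<theta> * h + (- ln 2 - ln t - ln (1 - t)))"
    unfolding stat_pairing_def log_sech_def lc lh by (simp add: exp_add[symmetric] algebra_simps)
  also have "\<dots> = exp ((fst \<theta> - 1) * ln 2 + (beta_b \<theta> - 1) * ln t + (beta_a \<theta> - 1) * ln (1 - t))"
    unfolding h_def beta_a_def beta_b_def
    by (simp add: algebra_simps diff_divide_distrib add_divide_distrib)
  also have "\<dots> = exp ((fst \<theta> - 1) * ln 2) * (t powr (beta_b \<theta> - 1) * (1 - t) powr (beta_a \<theta> - 1))"
    using t by (simp add: powr_def exp_add mult.commute)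
  finally show ?thesis
    by (simp add: h_def)
qed

lemma logit_substitution:
  fixes f :: "real \<Rightarrow> real"
  assumes cont: "\<And>x. isCont f x" and nonneg: "\<And>x. 0 \<le> f x"
    and integrable: "set_integrable lborel {0<..<1} (\<lambda>t. f ((ln t - ln (1 - t)) / 2) / (2 * t * (1 - t)))"
  shows "integrable lborel f"
    and "(\<integral>x. f x \<partial>lborel) = (LBINT t:{0<..<1}. f ((ln t - ln (1 - t)) / 2) / (2 * t * (1 - t)))"
proof -
  define h where "h t = (ln t - ln (1 - t)) / 2" for t :: real
  define h' where "h' t = 1 / (2 * t * (1 - t))" for t :: real
  have h_deriv: "(h has_real_derivative h' t) (at t)" if "ereal 0 < ereal t" "ereal t < ereal 1" for t
    unfolding h_def h'_def using that by (auto intro!: derivative_eq_intros simp: field_simps)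
  have h_bot: "((ereal \<circ> h \<circ> real_of_ereal) \<longlongrightarrow> - \<infinity>) (at_right (ereal 0))"
    unfolding comp_assoc[symmetric] ereal_tendsto_simps h_def by real_asymp
  have h_top: "((ereal \<circ> h \<circ> real_of_ereal) \<longlongrightarrow> \<infinity>) (at_left (ereal 1))"
    unfolding comp_assoc[symmetric] ereal_tendsto_simps h_def by real_asymp
  have cont_h': "isCont h' t" if "ereal 0 < ereal t" "ereal t < ereal 1" for t
    unfolding h'_def using that by (auto intro!: continuous_intros)
  have h'_nonneg: "0 \<le> h' t" if "ereal 0 \<le> ereal t" "ereal t \<le> ereal 1" for t
    unfolding h'_def using that by auto
  have "set_integrable lborel (einterval (ereal 0) (ereal 1)) (\<lambda>t. f (h t) * h' t)"
    using integrable by (simp add: h_def h'_def einterval_eq)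
  note sub = interval_integral_substitution_nonneg[OF _ h_deriv cont cont_h' nonneg h'_nonneg
      h_bot h_top this]
  show "integrable lborel f"
    using sub(1) by (simp add: set_integrable_def)
  have "(\<integral>x. f x \<partial>lborel) = (LBINT x=-\<infinity>..\<infinity>. f x)"
    by (simp add: interval_lebesgue_integral_def set_lebesgue_integral_def)
  also have "\<dots> = (LBINT t:{0<..<1}. f ((ln t - ln (1 - t)) / 2) / (2 * t * (1 - t)))"
    using sub(2) by (simp add: interval_lebesgue_integral_def einterval_eq h_def h'_def)
  finally show "(\<integral>x. f x \<partial>lborel) = (LBINT t:{0<..<1}. f ((ln t - ln (1 - t)) / 2) / (2 * t * (1 - t)))" .
qed

lemma partition_function_integral:
  assumes "\<theta> \<in> Theta"
  shows "integrable lborel (\<lambda>x. exp (stat_pairing \<theta> x))"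
    and "(\<integral>x. exp (stat_pairing \<theta> x) \<partial>lborel) = partition_function \<theta>"
proof -
  have pos: "0 < beta_a \<theta>" "0 < beta_b \<theta>" "0 < fst \<theta>"
    using Theta_pos[OF assms] by auto
  define C where "C = exp ((fst \<theta> - 1) * ln 2)"
  define B where "B t = C * (t powr (beta_b \<theta> - 1) * (1 - t) powr (beta_a \<theta> - 1))" for t :: real
  have B_integrable: "set_integrable lborel {0..1} B"
    unfolding B_def using integrable_Beta[OF pos(2) pos(1)] by (simp add: set_integrable_mult_right)
  have subst_eq: "exp (stat_pairing \<theta> ((ln t - ln (1 - t)) / 2)) / (2 * t * (1 - t)) = B t"
    if "t \<in> {0<..<1}" for t
    using exp_stat_pairing_logit[of t \<theta>] that unfolding B_def C_def by auto
  have "set_integrable lborel {0<..<1} B"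
    by (rule set_integrable_subset[OF B_integrable]) auto
  then have integrable: "set_integrable lborel {0<..<1}
      (\<lambda>t. exp (stat_pairing \<theta> ((ln t - ln (1 - t)) / 2)) / (2 * t * (1 - t)))"
    by (subst set_integrable_cong[OF refl refl subst_eq]) auto
  have "isCont (\<lambda>x. exp (stat_pairing \<theta> x)) x" for x
    unfolding stat_pairing_def by (intro continuous_on_interior[of UNIV] continuous_intros) auto
  note sub = logit_substitution[OF this exp_ge_zero integrable]
  show "integrable lborel (\<lambda>x. exp (stat_pairing \<theta> x))"
    by (rule sub(1))
  have "(\<integral>x. exp (stat_pairing \<theta> x) \<partial>lborel) = (LBINT t:{0<..<1}. B t)"
    unfolding sub(2) by (rule set_lebesgue_integral_cong) (auto simp: subst_eq)
  also have "\<dots> = integral {0..1} B"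
    using interval_integral_Icc[of 0 1 B] set_borel_integral_eq_integral(2)[OF B_integrable]
    by (simp add: interval_lebesgue_integral_def einterval_eq)
  also have "\<dots> = C * Beta (beta_b \<theta>) (beta_a \<theta>)"
    unfolding B_def by (intro integral_unique has_integral_mult_right has_integral_Beta_real pos)
  also have "\<dots> = partition_function \<theta>"
  proof -
    have "beta_b \<theta> + beta_a \<theta> = fst \<theta>"
      by (simp add: beta_a_def beta_b_def field_simps)
    then show ?thesis
      using pos unfolding partition_function_def log_partition_def C_def Beta_def
      by (simp add: Gamma_real_pos_exp exp_add exp_diff)
  qed
  finally show "(\<integral>x. exp (stat_pairing \<theta> x) \<partial>lborel) = partition_function \<theta>" .
qed

section \<open>Differentiation under the integral sign\<close>

lemma abs_exp_minus_one_le: "\<bar>exp u - 1\<bar> \<le> \<bar>u\<bar> * exp \<bar>u\<bar>" for u :: real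
proof (cases "u \<ge> 0")
  case True
  have "(1 - u) * exp u \<le> exp (- u) * exp u"
    using exp_ge_add_one_self[of "- u"] by (intro mult_right_mono) auto
  then show ?thesis
    using True by (simp add: exp_minus field_simps)
next
  case False
  then have "\<bar>exp u - 1\<bar> \<le> \<bar>u\<bar>"
    using exp_ge_add_one_self[of u] exp_le_one_iff[of u] by arith
  also have "\<dots> \<le> \<bar>u\<bar> * exp \<bar>u\<bar>"
    by (simp add: mult_le_cancel_left1)
  finally show ?thesis .
qed

lemma abs_exp_diff_quotient_le:
  fixes h y :: real
  assumes "h \<noteq> 0"
  shows "\<bar>(exp (h * y) - 1) / h\<bar> \<le> \<bar>y\<bar> * exp (\<bar>h\<bar> * \<bar>y\<bar>)"
proof -
  have "\<bar>(exp (h * y) - 1) / h\<bar> \<le> \<bar>h * y\<bar> * exp \<bar>h * y\<bar> / \<bar>h\<bar>"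
    unfolding abs_divide by (intro divide_right_mono abs_exp_minus_one_le) simp
  then show ?thesis
    using assms by (simp add: abs_mult)
qed

lemma abs_mult_exp_le:
  fixes d h y :: real
  assumes "0 < d" and "\<bar>h\<bar> \<le> d"
  shows "\<bar>y\<bar> * exp (\<bar>h\<bar> * \<bar>y\<bar>) \<le> (exp (2 * d * y) + exp (- 2 * d * y)) / d"
proof -
  have "d * \<bar>y\<bar> \<le> exp (d * \<bar>y\<bar>)"
    using exp_ge_add_one_self[of "d * \<bar>y\<bar>"] by linarith
  then have "\<bar>y\<bar> \<le> exp (d * \<bar>y\<bar>) / d"
    using assms(1) by (simp add: field_simps)
  moreover have "exp (\<bar>h\<bar> * \<bar>y\<bar>) \<le> exp (d * \<bar>y\<bar>)"
    using assms(2) by (simp add: mult_right_mono)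
  ultimately have "\<bar>y\<bar> * exp (\<bar>h\<bar> * \<bar>y\<bar>) \<le> exp (d * \<bar>y\<bar>) / d * exp (d * \<bar>y\<bar>)"
    by (intro mult_mono) auto
  also have "\<dots> = exp (2 * d * \<bar>y\<bar>) / d"
    by (simp add: mult_exp_exp)
  also have "\<dots> \<le> (exp (2 * d * y) + exp (- 2 * d * y)) / d"
    using assms(1) by (intro divide_right_mono) (cases "y \<ge> 0"; simp add: add_increasing add_increasing2)+
  finally show ?thesis .
qed

lemma exp_diff_quotient_tendsto:
  fixes y :: real
  assumes "h \<longlonglongrightarrow> 0" and "\<And>i. h i \<noteq> 0"
  shows "(\<lambda>i. (exp (h i * y) - 1) / h i) \<longlonglongrightarrow> y"
proof -
  have "((\<lambda>s. exp (s * y)) has_real_derivative y) (at 0)"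
    by (auto intro!: derivative_eq_intros)
  then have "((\<lambda>s. (exp (s * y) - 1) / s) \<longlongrightarrow> y) (at 0)"
    unfolding has_field_derivative_iff by simp
  moreover have "filterlim h (at 0) sequentially"
    using assms by (intro filterlim_atI) auto
  ultimately show ?thesis
    by (rule filterlim_compose)
qed

lemma abs_exp_family_bound:
  fixes a d h t y :: real
  assumes "0 < d" and "\<bar>h\<bar> \<le> d"
  shows "\<bar>a * exp (t * y)\<bar> * (\<bar>y\<bar> * exp (\<bar>h\<bar> * \<bar>y\<bar>))
    \<le> (\<bar>a * exp ((t + 2 * d) * y)\<bar> + \<bar>a * exp ((t - 2 * d) * y)\<bar>) / d"
proof -
  have "\<bar>a * exp (t * y)\<bar> * (\<bar>y\<bar> * exp (\<bar>h\<bar> * \<bar>y\<bar>))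
      \<le> \<bar>a * exp (t * y)\<bar> * ((exp (2 * d * y) + exp (- 2 * d * y)) / d)"
    by (intro mult_left_mono abs_mult_exp_le assms) simp
  also have "\<dots> = (\<bar>a * exp ((t + 2 * d) * y)\<bar> + \<bar>a * exp ((t - 2 * d) * y)\<bar>) / d"
    by (simp add: abs_mult field_simps mult_exp_exp)
  finally show ?thesis .
qed

lemma integral_exp_diff_quotient_tendsto:
  fixes f Y X :: "_ \<Rightarrow> real"
  assumes "0 < d" and [measurable]: "f \<in> borel_measurable borel" "Y \<in> borel_measurable borel"
    and integrable: "\<And>s. \<bar>s - t\<bar> \<le> 2 * d \<Longrightarrow> integrable lborel (\<lambda>x. f x * exp (s * Y x))"
    and "X \<longlonglongrightarrow> t" and X_ne: "\<And>i. X i \<noteq> t" and X_le: "\<And>i. \<bar>X i - t\<bar> \<le> d"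
  shows "(\<lambda>i. ((\<integral>x. f x * exp (X i * Y x) \<partial>lborel) - (\<integral>x. f x * exp (t * Y x) \<partial>lborel)) / (X i - t))
    \<longlonglongrightarrow> (\<integral>x. f x * Y x * exp (t * Y x) \<partial>lborel)"
proof -
  define g where "g i x = f x * exp (t * Y x) * ((exp ((X i - t) * Y x) - 1) / (X i - t))" for i x
  define w where
    "w x = (\<bar>f x * exp ((t + 2 * d) * Y x)\<bar> + \<bar>f x * exp ((t - 2 * d) * Y x)\<bar>) / d" for x
  have "((\<integral>x. f x * exp (X i * Y x) \<partial>lborel) - (\<integral>x. f x * exp (t * Y x) \<partial>lborel)) / (X i - t)
      = (\<integral>x. g i x \<partial>lborel)" for i
  proof -
    have "exp (X i * Y x) = exp (t * Y x) * exp ((X i - t) * Y x)" for x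
      by (simp add: mult_exp_exp algebra_simps)
    then show ?thesis
      using integrable[of "X i"] integrable[of t] X_le[of i] assms(1)
      unfolding g_def by (simp add: algebra_simps diff_divide_distrib[symmetric])
  qed
  moreover have "(\<lambda>i. \<integral>x. g i x \<partial>lborel) \<longlonglongrightarrow> (\<integral>x. f x * exp (t * Y x) * Y x \<partial>lborel)"
  proof (rule integral_dominated_convergence)
    show "integrable lborel w"
      unfolding w_def using integrable[of "t + 2 * d"] integrable[of "t - 2 * d"] assms(1) by simp
    have "(\<lambda>i. (exp ((X i - t) * y) - 1) / (X i - t)) \<longlonglongrightarrow> y" for y
      using exp_diff_quotient_tendsto[OF LIM_zero[OF \<open>X \<longlonglongrightarrow> t\<close>]] X_ne by simp
    then show "AE x in lborel. (\<lambda>i. g i x) \<longlonglongrightarrow> f x * exp (t * Y x) * Y x"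
      unfolding g_def by (intro AE_I2 tendsto_mult tendsto_const)
    have "norm (g i x) \<le> \<bar>f x * exp (t * Y x)\<bar> * (\<bar>Y x\<bar> * exp (\<bar>X i - t\<bar> * \<bar>Y x\<bar>))" for i x
      unfolding g_def real_norm_def abs_mult[of "f x * exp (t * Y x)"]
      by (intro mult_left_mono abs_exp_diff_quotient_le) (use X_ne in auto)
    then show "AE x in lborel. norm (g i x) \<le> w x" for i
      unfolding w_def using abs_exp_family_bound[OF assms(1) X_le] order_trans by blast
  qed (auto simp: g_def)
  ultimately show ?thesis
    by (simp add: mult_ac)
qed

lemma integral_exp_has_real_derivative:
  fixes f Y :: "real \<Rightarrow> real"
  assumes "open I" and "t \<in> I"
    and [measurable]: "f \<in> borel_measurable borel" "Y \<in> borel_measurable borel"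
    and integrable: "\<And>s. s \<in> I \<Longrightarrow> integrable lborel (\<lambda>x. f x * exp (s * Y x))"
  shows "integrable lborel (\<lambda>x. f x * Y x * exp (t * Y x))"
    and "((\<lambda>s. \<integral>x. f x * exp (s * Y x) \<partial>lborel) has_real_derivative
          (\<integral>x. f x * Y x * exp (t * Y x) \<partial>lborel)) (at t)"
proof -
  obtain e where e: "0 < e" "ball t e \<subseteq> I"
    using assms(1,2) openE by blast
  define d where "d = e / 3"
  have d: "0 < d" and integrable_near: "\<And>s. \<bar>s - t\<bar> \<le> 2 * d \<Longrightarrow> integrable lborel (\<lambda>x. f x * exp (s * Y x))"
    using e by (auto simp: d_def dist_real_def abs_minus_commute intro!: integrable subsetD[OF e(2)])
  show "integrable lborel (\<lambda>x. f x * Y x * exp (t * Y x))"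
  proof (rule Bochner_Integration.integrable_bound)
    show "integrable lborel (\<lambda>x. (\<bar>f x * exp ((t + 2 * d) * Y x)\<bar> + \<bar>f x * exp ((t - 2 * d) * Y x)\<bar>) / d)"
      using integrable_near[of "t + 2 * d"] integrable_near[of "t - 2 * d"] d by simp
    have "\<bar>f x * Y x * exp (t * Y x)\<bar>
        \<le> (\<bar>f x * exp ((t + 2 * d) * Y x)\<bar> + \<bar>f x * exp ((t - 2 * d) * Y x)\<bar>) / d" for x
      using abs_exp_family_bound[OF d, of 0 "f x" t "Y x"] d by (simp add: abs_mult mult_ac)
    then show "AE x in lborel. norm (f x * Y x * exp (t * Y x))
        \<le> norm ((\<bar>f x * exp ((t + 2 * d) * Y x)\<bar> + \<bar>f x * exp ((t - 2 * d) * Y x)\<bar>) / d)"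
      using d by simp
  qed measurable
  have "((\<lambda>s. ((\<integral>x. f x * exp (s * Y x) \<partial>lborel) - (\<integral>x. f x * exp (t * Y x) \<partial>lborel)) / (s - t))
      \<longlongrightarrow> (\<integral>x. f x * Y x * exp (t * Y x) \<partial>lborel)) (at t within ball t d)"
    unfolding tendsto_at_iff_sequentially o_def
    using d integrable_near
    by (auto simp: dist_real_def abs_minus_commute less_imp_le
        intro!: integral_exp_diff_quotient_tendsto[where d = d])
  then show "((\<lambda>s. \<integral>x. f x * exp (s * Y x) \<partial>lborel) has_real_derivative
      (\<integral>x. f x * Y x * exp (t * Y x) \<partial>lborel)) (at t)"
    unfolding has_field_derivative_iff using at_within_open[of t "ball t d"] d by simp
qed

section \<open>Moments, Fisher metric and skewness tensor\<close>

definition raw_moment :: "nat list \<Rightarrow> real \<times> real \<Rightarrow> real" where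
  "raw_moment is \<theta> = (\<integral>x. (\<Prod>i\<leftarrow>is. suff_stat i x) * exp (stat_pairing \<theta> x) \<partial>lborel)"

lemma suff_stat_measurable [measurable]: "suff_stat i \<in> borel_measurable borel"
  unfolding suff_stat_def by measurable

lemma suff_stat_prod_measurable [measurable]: "(\<lambda>x. \<Prod>i\<leftarrow>is. suff_stat i x) \<in> borel_measurable borel"
  by (induction "is") auto

lemma stat_pairing_measurable [measurable]: "stat_pairing \<theta> \<in> borel_measurable borel"
  unfolding stat_pairing_def by measurable

lemma raw_moment_Cons_has_derivative:
  assumes integrable:
      "\<And>\<eta>. \<eta> \<in> Theta \<Longrightarrow> integrable lborel (\<lambda>x. (\<Prod>i\<leftarrow>is. suff_stat i x) * exp (stat_pairing \<eta> x))"
    and "\<theta> \<in> Theta" and "l \<in> idx"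
  shows "integrable lborel (\<lambda>x. (\<Prod>i\<leftarrow>l # is. suff_stat i x) * exp (stat_pairing \<theta> x))"
    and "((\<lambda>t. raw_moment is (upd l t \<theta>)) has_real_derivative raw_moment (l # is) \<theta>) (at (comp l \<theta>))"
proof -
  define f where
    "f x = (\<Prod>i\<leftarrow>is. suff_stat i x) * exp (stat_pairing \<theta> x - comp l \<theta> * suff_stat l x)" for x
  have shift: "f x * exp (s * suff_stat l x) = (\<Prod>i\<leftarrow>is. suff_stat i x) * exp (stat_pairing (upd l s \<theta>) x)"
    for s x
    unfolding f_def stat_pairing_upd[OF assms(3)] by (simp add: mult_exp_exp algebra_simps)
  have at_\<theta>: "f x * suff_stat l x * exp (comp l \<theta> * suff_stat l x)
      = (\<Prod>i\<leftarrow>l # is. suff_stat i x) * exp (stat_pairing \<theta> x)" for x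
    using shift[of x "comp l \<theta>"] by (simp add: mult_ac)
  have f_measurable: "f \<in> borel_measurable borel"
    unfolding f_def by measurable
  have on_line: "comp l \<theta> \<in> {s. upd l s \<theta> \<in> Theta}"
    using assms(2) by simp
  have "integrable lborel (\<lambda>x. f x * exp (s * suff_stat l x))" if "s \<in> {s. upd l s \<theta> \<in> Theta}" for s
    unfolding shift using integrable that by simp
  note derivative = integral_exp_has_real_derivative[OF open_Theta_line on_line f_measurable
      suff_stat_measurable this]
  show "integrable lborel (\<lambda>x. (\<Prod>i\<leftarrow>l # is. suff_stat i x) * exp (stat_pairing \<theta> x))"
    and "((\<lambda>t. raw_moment is (upd l t \<theta>)) has_real_derivative raw_moment (l # is) \<theta>) (at (comp l \<theta>))"
    using derivative unfolding shift at_\<theta> raw_moment_def by simp_all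
qed

lemma raw_moment_integrable:
  "\<theta> \<in> Theta \<Longrightarrow> set is \<subseteq> idx \<Longrightarrow>
    integrable lborel (\<lambda>x. (\<Prod>i\<leftarrow>is. suff_stat i x) * exp (stat_pairing \<theta> x))"
proof (induction "is" arbitrary: \<theta>)
  case Nil
  then show ?case
    using partition_function_integral(1) by simp
next
  case (Cons l "is")
  then show ?case
    using raw_moment_Cons_has_derivative(1)[of "is" \<theta> l] by simp
qed

lemma moment_integrable:
  assumes "\<theta> \<in> Theta"
  shows "integrable lborel (\<lambda>x. exp (stat_pairing \<theta> x))"
    and "i \<in> idx \<Longrightarrow> integrable lborel (\<lambda>x. suff_stat i x * exp (stat_pairing \<theta> x))"
    and "i \<in> idx \<Longrightarrow> j \<in> idx \<Longrightarrow>
      integrable lborel (\<lambda>x. suff_stat i x * (suff_stat j x * exp (stat_pairing \<theta> x)))"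
    and "i \<in> idx \<Longrightarrow> j \<in> idx \<Longrightarrow> k \<in> idx \<Longrightarrow>
      integrable lborel (\<lambda>x. suff_stat i x * (suff_stat j x * (suff_stat k x * exp (stat_pairing \<theta> x))))"
  using raw_moment_integrable[OF assms, of "[]"] raw_moment_integrable[OF assms, of "[i]"]
    raw_moment_integrable[OF assms, of "[i, j]"] raw_moment_integrable[OF assms, of "[i, j, k]"]
  by (simp_all add: mult.assoc)

lemma raw_moment_Cons:
  assumes "\<theta> \<in> Theta" and "l \<in> idx" and "set is \<subseteq> idx"
  shows "raw_moment (l # is) \<theta> = pd l (raw_moment is) \<theta>"
proof -
  have "((\<lambda>t. raw_moment is (upd l t \<theta>)) has_real_derivative raw_moment (l # is) \<theta>) (at (comp l \<theta>))"
    by (rule raw_moment_Cons_has_derivative(2)[OF raw_moment_integrable]) (use assms in auto)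
  then show ?thesis
    unfolding pd_def by (simp add: DERIV_imp_deriv)
qed

lemma raw_moment_Nil: "\<theta> \<in> Theta \<Longrightarrow> raw_moment [] \<theta> = partition_function \<theta>"
  using partition_function_integral(2) by (simp add: raw_moment_def)

lemma raw_moment_single:
  assumes "\<theta> \<in> Theta" and "i \<in> idx"
  shows "raw_moment [i] \<theta> = partition_function \<theta> * lp_grad i \<theta>"
  using raw_moment_Cons[OF assms, of "[]"] pd_eqI[OF assms(1) raw_moment_Nil]
    partition_function_has_derivative[OF assms] by simp

lemma raw_moment_pair:
  assumes "\<theta> \<in> Theta" and "i \<in> idx" and "j \<in> idx"
  shows "raw_moment [i, j] \<theta> = partition_function \<theta> * (lp_deriv [i, j] \<theta> + lp_grad i \<theta> * lp_grad j \<theta>)"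
proof -
  have "pd i (raw_moment [j]) \<theta> = partition_function \<theta> * (lp_deriv [i, j] \<theta> + lp_grad i \<theta> * lp_grad j \<theta>)"
    using assms
    by (intro pd_eqI[where H = "\<lambda>\<eta>. partition_function \<eta> * lp_grad j \<eta>"])
      (auto simp: raw_moment_single algebra_simps
        intro!: derivative_eq_intros partition_function_has_derivative lp_grad_has_derivative)
  then show ?thesis
    using raw_moment_Cons[of \<theta> i "[j]"] assms by simp
qed

lemma raw_moment_triple:
  assumes "\<theta> \<in> Theta" and "i \<in> idx" and "j \<in> idx" and "k \<in> idx"
  shows "raw_moment [i, j, k] \<theta> = partition_function \<theta> *
    (lp_deriv [i, j, k] \<theta> + lp_grad i \<theta> * lp_deriv [j, k] \<theta> + lp_grad j \<theta> * lp_deriv [i, k] \<theta>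
     + lp_grad k \<theta> * lp_deriv [i, j] \<theta> + lp_grad i \<theta> * lp_grad j \<theta> * lp_grad k \<theta>)"
proof -
  have "pd i (raw_moment [j, k]) \<theta> = partition_function \<theta> *
    (lp_deriv [i, j, k] \<theta> + lp_grad i \<theta> * lp_deriv [j, k] \<theta> + lp_grad j \<theta> * lp_deriv [i, k] \<theta>
     + lp_grad k \<theta> * lp_deriv [i, j] \<theta> + lp_grad i \<theta> * lp_grad j \<theta> * lp_grad k \<theta>)"
    using assms
    by (intro pd_eqI[where H = "\<lambda>\<eta>. partition_function \<eta> * (lp_deriv [j, k] \<eta> + lp_grad j \<eta> * lp_grad k \<eta>)"])
      (auto simp: raw_moment_pair algebra_simps
        intro!: derivative_eq_intros partition_function_has_derivative lp_grad_has_derivative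
          lp_deriv_has_derivative)
  then show ?thesis
    using raw_moment_Cons[of \<theta> i "[j, k]"] assms by simp
qed

lemma integral_shifted_product2:
  fixes A B e :: "'a \<Rightarrow> real"
  assumes "integrable M (\<lambda>x. A x * B x * e x)" "integrable M (\<lambda>x. A x * e x)"
    "integrable M (\<lambda>x. B x * e x)" "integrable M e"
  shows "integrable M (\<lambda>x. (A x - a) * (B x - b) * (e x / c))"
    and "(\<integral>x. (A x - a) * (B x - b) * (e x / c) \<partial>M) =
      ((\<integral>x. A x * B x * e x \<partial>M) - b * (\<integral>x. A x * e x \<partial>M) - a * (\<integral>x. B x * e x \<partial>M)
       + a * b * (\<integral>x. e x \<partial>M)) / c"
proof -
  have "(\<lambda>x. (A x - a) * (B x - b) * (e x / c)) =
      (\<lambda>x. (A x * B x * e x - b * (A x * e x) - a * (B x * e x) + a * b * e x) / c)"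
    by (rule ext, cases "c = 0") (simp_all add: field_simps)
  then show "integrable M (\<lambda>x. (A x - a) * (B x - b) * (e x / c))"
    and "(\<integral>x. (A x - a) * (B x - b) * (e x / c) \<partial>M) =
      ((\<integral>x. A x * B x * e x \<partial>M) - b * (\<integral>x. A x * e x \<partial>M) - a * (\<integral>x. B x * e x \<partial>M)
       + a * b * (\<integral>x. e x \<partial>M)) / c"
    using assms by simp_all
qed

lemma integral_shifted_product3:
  fixes A B C e :: "'a \<Rightarrow> real"
  assumes "integrable M (\<lambda>x. A x * B x * C x * e x)" "integrable M (\<lambda>x. B x * C x * e x)"
    "integrable M (\<lambda>x. A x * C x * e x)" "integrable M (\<lambda>x. A x * B x * e x)"
    "integrable M (\<lambda>x. A x * e x)" "integrable M (\<lambda>x. B x * e x)" "integrable M (\<lambda>x. C x * e x)"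
    "integrable M e"
  shows "(\<integral>x. (A x - a) * (B x - b) * (C x - c) * (e x / d) \<partial>M) =
    ((\<integral>x. A x * B x * C x * e x \<partial>M) - a * (\<integral>x. B x * C x * e x \<partial>M) - b * (\<integral>x. A x * C x * e x \<partial>M)
     - c * (\<integral>x. A x * B x * e x \<partial>M) + a * b * (\<integral>x. C x * e x \<partial>M) + a * c * (\<integral>x. B x * e x \<partial>M)
     + b * c * (\<integral>x. A x * e x \<partial>M) - a * b * c * (\<integral>x. e x \<partial>M)) / d"
proof -
  have "(\<lambda>x. (A x - a) * (B x - b) * (C x - c) * (e x / d)) =
      (\<lambda>x. (A x * B x * C x * e x - a * (B x * C x * e x) - b * (A x * C x * e x) - c * (A x * B x * e x)
        + a * b * (C x * e x) + a * c * (B x * e x) + b * c * (A x * e x) - a * b * c * e x) / d)"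
    by (rule ext, cases "d = 0") (simp_all add: field_simps)
  then show ?thesis
    using assms by simp
qed

lemma score_product_dens_eq:
  assumes "\<theta> \<in> Theta" and "i \<in> idx" and "j \<in> idx"
  shows "score i \<theta> x * score j \<theta> x * dens \<theta> x
      = (suff_stat i x - lp_grad i \<theta>) * (suff_stat j x - lp_grad j \<theta>)
        * (exp (stat_pairing \<theta> x) / partition_function \<theta>)"
  using assms by (simp add: score_eq dens_eq)

lemma score_product_integrable:
  assumes "\<theta> \<in> Theta" and "i \<in> idx" and "j \<in> idx"
  shows "integrable lborel (\<lambda>x. score i \<theta> x * score j \<theta> x * dens \<theta> x)"
  unfolding score_product_dens_eq[OF assms] using assms
  by (intro integral_shifted_product2(1)) (simp_all add: moment_integrable mult.assoc)

lemma fisher_eq: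
  assumes "\<theta> \<in> Theta" and "i \<in> idx" and "j \<in> idx"
  shows "fisher i j \<theta> = lp_deriv [i, j] \<theta>"
proof -
  have "fisher i j \<theta> = (raw_moment [i, j] \<theta> - lp_grad j \<theta> * raw_moment [i] \<theta>
      - lp_grad i \<theta> * raw_moment [j] \<theta> + lp_grad i \<theta> * lp_grad j \<theta> * raw_moment [] \<theta>)
      / partition_function \<theta>"
    unfolding fisher_def score_product_dens_eq[OF assms] using assms
    by (subst integral_shifted_product2(2)) (simp_all add: moment_integrable raw_moment_def mult.assoc)
  then show ?thesis
    using assms by (simp add: raw_moment_Nil raw_moment_single raw_moment_pair partition_function_def
        field_simps)
qed

lemma score_triple_dens_eq:
  assumes "\<theta> \<in> Theta" and "i \<in> idx" and "j \<in> idx" and "k \<in> idx"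
  shows "score i \<theta> x * score j \<theta> x * score k \<theta> x * dens \<theta> x
      = (suff_stat i x - lp_grad i \<theta>) * (suff_stat j x - lp_grad j \<theta>) * (suff_stat k x - lp_grad k \<theta>)
        * (exp (stat_pairing \<theta> x) / partition_function \<theta>)"
  using assms by (simp add: score_eq dens_eq)

lemma skew_eq:
  assumes "\<theta> \<in> Theta" and "i \<in> idx" and "j \<in> idx" and "k \<in> idx"
  shows "skew i j k \<theta> = lp_deriv [i, j, k] \<theta>"
proof -
  have "skew i j k \<theta> = (raw_moment [i, j, k] \<theta> - lp_grad i \<theta> * raw_moment [j, k] \<theta>
      - lp_grad j \<theta> * raw_moment [i, k] \<theta> - lp_grad k \<theta> * raw_moment [i, j] \<theta>
      + lp_grad i \<theta> * lp_grad j \<theta> * raw_moment [k] \<theta> + lp_grad i \<theta> * lp_grad k \<theta> * raw_moment [j] \<theta>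
      + lp_grad j \<theta> * lp_grad k \<theta> * raw_moment [i] \<theta>
      - lp_grad i \<theta> * lp_grad j \<theta> * lp_grad k \<theta> * raw_moment [] \<theta>) / partition_function \<theta>"
    unfolding skew_def score_triple_dens_eq[OF assms] using assms
    by (subst integral_shifted_product3)
      (simp_all add: moment_integrable raw_moment_def mult.assoc)
  then show ?thesis
    using assms by (simp add: raw_moment_Nil raw_moment_single raw_moment_pair raw_moment_triple
        partition_function_def field_simps)
qed

lemma integral_pos_if_continuous:
  fixes h :: "real \<Rightarrow> real"
  assumes "integrable lborel h" and "continuous_on UNIV h"
    and "\<And>x. 0 \<le> h x" and "h x\<^sub>0 \<noteq> 0"
  shows "0 < integral\<^sup>L lborel h"
proof -
  have "integral\<^sup>L lborel h \<noteq> 0"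
  proof
    assume "integral\<^sup>L lborel h = 0"
    then have "AE x in lborel. h x = 0"
      using integral_nonneg_eq_0_iff_AE[OF assms(1)] assms(3) by simp
    then have "AE x in lebesgue. x \<in> {x. h x = 0}"
      by (simp add: AE_completion)
    moreover have "closed {x. h x = 0}"
      using assms(2) by (intro closed_Collect_eq continuous_intros) auto
    ultimately show False
      using mem_closed_if_AE_lebesgue assms(4) by blast
  qed
  moreover have "0 \<le> integral\<^sup>L lborel h"
    using assms(3) by simp
  ultimately show ?thesis
    by simp
qed

lemma fisher_sym: "fisher i j \<theta> = fisher j i \<theta>"
  unfolding fisher_def by (simp add: mult_ac)

lemma affine_log_sech_nonconstant:
  assumes "(c\<^sub>1, c\<^sub>2) \<noteq> (0, 0)"
  shows "\<exists>x. c\<^sub>1 * (log_sech x - a) + c\<^sub>2 * (x - b) \<noteq> 0"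
proof (rule ccontr)
  define L where "L x = c\<^sub>1 * (log_sech x - a) + c\<^sub>2 * (x - b)" for x
  assume "\<nexists>x. c\<^sub>1 * (log_sech x - a) + c\<^sub>2 * (x - b) \<noteq> 0"
  then have "L x = 0" for x
    unfolding L_def by blast
  moreover have log_sech_0: "log_sech 0 = 0" and log_sech_neg: "log_sech (- 1) = log_sech 1"
    and "log_sech 1 \<noteq> 0"
    using cosh_real_strict_mono[of 0 1] by (auto simp: log_sech_def)
  moreover have "L 1 - L (- 1) = 2 * c\<^sub>2" and "L 1 - L 0 = c\<^sub>1 * log_sech 1 + c\<^sub>2"
    unfolding L_def log_sech_0 log_sech_neg by (simp_all add: algebra_simps)
  ultimately have "c\<^sub>2 = 0" and "c\<^sub>1 = 0"
    by simp_all
  with assms show False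
    by simp
qed

lemma fisher_quadratic_form_pos:
  assumes "\<theta> \<in> Theta" and "(c\<^sub>1, c\<^sub>2) \<noteq> (0, 0)"
  shows "0 < c\<^sub>1\<^sup>2 * fisher 1 1 \<theta> + 2 * c\<^sub>1 * c\<^sub>2 * fisher 1 2 \<theta> + c\<^sub>2\<^sup>2 * fisher 2 2 \<theta>"
proof -
  define L where "L x = c\<^sub>1 * score 1 \<theta> x + c\<^sub>2 * score 2 \<theta> x" for x
  have L_eq: "L x = c\<^sub>1 * (log_sech x - lp_grad 1 \<theta>) + c\<^sub>2 * (x - lp_grad 2 \<theta>)" for x
    unfolding L_def score_eq[OF assms(1) one_in_idx] score_eq[OF assms(1) two_in_idx]
    by (simp add: suff_stat_def)
  have expand: "(\<lambda>x. (L x)\<^sup>2 * dens \<theta> x) = (\<lambda>x. c\<^sub>1\<^sup>2 * (score 1 \<theta> x * score 1 \<theta> x * dens \<theta> x)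
      + 2 * c\<^sub>1 * c\<^sub>2 * (score 1 \<theta> x * score 2 \<theta> x * dens \<theta> x)
      + c\<^sub>2\<^sup>2 * (score 2 \<theta> x * score 2 \<theta> x * dens \<theta> x))"
    by (simp add: L_def power2_eq_square algebra_simps)
  have "\<exists>x\<^sub>0. L x\<^sub>0 \<noteq> 0"
    unfolding L_eq using assms(2) by (rule affine_log_sech_nonconstant)
  then obtain x\<^sub>0 where "L x\<^sub>0 \<noteq> 0"
    by blast
  have dens_pos: "0 < dens \<theta> x" for x
    using assms(1) by (simp add: dens_eq partition_function_def)
  then have "0 \<le> (L x)\<^sup>2 * dens \<theta> x" and "(L x\<^sub>0)\<^sup>2 * dens \<theta> x\<^sub>0 \<noteq> 0" for x
    using \<open>L x\<^sub>0 \<noteq> 0\<close> by (simp_all add: less_imp_le less_imp_neq[symmetric])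
  moreover have "continuous_on UNIV (\<lambda>x. (L x)\<^sup>2 * dens \<theta> x)"
    unfolding L_eq dens_eq[OF assms(1)] stat_pairing_def
    by (intro continuous_intros) (simp add: partition_function_def)
  moreover have "integrable lborel (\<lambda>x. (L x)\<^sup>2 * dens \<theta> x)"
    unfolding expand
    by (intro Bochner_Integration.integrable_add Bochner_Integration.integrable_mult_right
        score_product_integrable assms(1)) (simp_all add: idx_def)
  ultimately have "0 < (\<integral>x. (L x)\<^sup>2 * dens \<theta> x \<partial>lborel)"
    by (intro integral_pos_if_continuous)
  also have "\<dots> = c\<^sub>1\<^sup>2 * fisher 1 1 \<theta> + 2 * c\<^sub>1 * c\<^sub>2 * fisher 1 2 \<theta> + c\<^sub>2\<^sup>2 * fisher 2 2 \<theta>"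
    unfolding expand fisher_def
    using score_product_integrable[OF assms(1) one_in_idx one_in_idx]
      score_product_integrable[OF assms(1) one_in_idx two_in_idx]
      score_product_integrable[OF assms(1) two_in_idx two_in_idx]
    by simp
  finally show ?thesis .
qed

lemma fisher_det_pos:
  assumes "\<theta> \<in> Theta"
  shows "0 < fisher_det \<theta>"
proof -
  have g22: "0 < fisher 2 2 \<theta>"
    using fisher_quadratic_form_pos[OF assms, of 0 1] by simp
  then have "0 < fisher 2 2 \<theta> * fisher_det \<theta>"
    using fisher_quadratic_form_pos[OF assms, of "fisher 2 2 \<theta>" "- fisher 1 2 \<theta>"]
    unfolding fisher_det_def fisher_sym[of 2 1] by (simp add: power2_eq_square algebra_simps)
  with g22 show ?thesis
    by (simp add: zero_less_mult_iff)
qed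

section \<open>The \<open>\<alpha>\<close>-connections and their curvature\<close>

lemma lp_deriv_swap: "lp_deriv [j, i] \<theta> = lp_deriv [i, j] \<theta>"
  by (rule lp_deriv_perm) (simp add: add_mset_commute)

lemma lp_deriv_rotate: "lp_deriv [j, k, i] \<theta> = lp_deriv [i, j, k] \<theta>"
  by (rule lp_deriv_perm) (simp add: add_mset_commute)

definition hess_det :: "real \<times> real \<Rightarrow> real" where
  "hess_det \<theta> = lp_deriv [1, 1] \<theta> * lp_deriv [2, 2] \<theta> - lp_deriv [1, 2] \<theta> * lp_deriv [2, 1] \<theta>"

text \<open>For \<open>s\<close> in \<open>idx = {1, 2}\<close>, \<open>3 - s\<close> is the other index: this is the adjugate formula for
  the inverse of a symmetric \<open>2 \<times> 2\<close> matrix.\<close>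
definition hess_inv :: "nat \<Rightarrow> nat \<Rightarrow> real \<times> real \<Rightarrow> real" where
  "hess_inv s k \<theta> = (if s = k then 1 else - 1) * lp_deriv [3 - s, 3 - k] \<theta> / hess_det \<theta>"

lemma fisher_det_eq: "\<theta> \<in> Theta \<Longrightarrow> fisher_det \<theta> = hess_det \<theta>"
  unfolding fisher_det_def hess_det_def by (simp add: fisher_eq)

lemma hess_det_nonzero: "\<theta> \<in> Theta \<Longrightarrow> hess_det \<theta> \<noteq> 0"
  using fisher_det_pos fisher_det_eq by fastforce

lemma fisher_inv_eq:
  assumes "\<theta> \<in> Theta" and "s \<in> idx" and "k \<in> idx"
  shows "fisher_inv s k \<theta> = hess_inv s k \<theta>"
  using idx_cases[OF assms(2)] idx_cases[OF assms(3)] assms(1)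
  by (auto simp: fisher_inv_def hess_inv_def fisher_eq fisher_det_eq lp_deriv_def d_beta_a_def)

lemma pd_fisher:
  assumes "\<theta> \<in> Theta" and "i \<in> idx" and "j \<in> idx" and "k \<in> idx"
  shows "pd i (fisher j k) \<theta> = lp_deriv [i, j, k] \<theta>"
  using assms by (intro pd_eqI[where H = "lp_deriv [j, k]"]) (auto simp: fisher_eq lp_deriv_has_derivative)

lemma conn_eq:
  assumes "\<theta> \<in> Theta" and "i \<in> idx" and "j \<in> idx" and "k \<in> idx"
  shows "conn \<alpha> i j k \<theta> = (1 - \<alpha>) / 2 * lp_deriv [i, j, k] \<theta>"
proof -
  have "LC i j k \<theta> = lp_deriv [i, j, k] \<theta> / 2"
    using assms unfolding LC_def by (simp add: pd_fisher lp_deriv_rotate[of i j k] lp_deriv_rotate[of j k i])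
  then show ?thesis
    using assms unfolding conn_def by (simp add: skew_eq algebra_simps)
qed

lemma conn_up_eq:
  assumes "\<theta> \<in> Theta" and "i \<in> idx" and "j \<in> idx" and "k \<in> idx"
  shows "conn_up \<alpha> i j k \<theta> = (1 - \<alpha>) / 2 * (\<Sum>s\<in>idx. lp_deriv [i, j, s] \<theta> * hess_inv s k \<theta>)"
  unfolding conn_up_def sum_distrib_left using assms
  by (intro sum.cong) (simp_all add: conn_eq fisher_inv_eq)

lemma hess_det_has_derivative:
  assumes "\<theta> \<in> Theta" and "l \<in> idx"
  shows "((\<lambda>t. hess_det (upd l t \<theta>)) has_real_derivative
      lp_deriv [l, 1, 1] \<theta> * lp_deriv [2, 2] \<theta> + lp_deriv [1, 1] \<theta> * lp_deriv [l, 2, 2] \<theta>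
      - (lp_deriv [l, 1, 2] \<theta> * lp_deriv [2, 1] \<theta> + lp_deriv [1, 2] \<theta> * lp_deriv [l, 2, 1] \<theta>))
    (at (comp l \<theta>))"
  unfolding hess_det_def
  by (auto intro!: derivative_eq_intros lp_deriv_has_derivative[OF assms])

lemma hess_inv_has_derivative:
  assumes "\<theta> \<in> Theta" and "l \<in> idx" and "s \<in> idx" and "k \<in> idx"
  shows "((\<lambda>t. hess_inv s k (upd l t \<theta>)) has_real_derivative
      - (\<Sum>a\<in>idx. \<Sum>b\<in>idx. hess_inv s a \<theta> * lp_deriv [l, a, b] \<theta> * hess_inv b k \<theta>))
    (at (comp l \<theta>))"
proof -
  define \<sigma> :: real where "\<sigma> = (if s = k then 1 else - 1)"
  have "((\<lambda>t. hess_inv s k (upd l t \<theta>)) has_real_derivative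
      (\<sigma> * lp_deriv [l, 3 - s, 3 - k] \<theta> * hess_det \<theta> - \<sigma> * lp_deriv [3 - s, 3 - k] \<theta>
        * (lp_deriv [l, 1, 1] \<theta> * lp_deriv [2, 2] \<theta> + lp_deriv [1, 1] \<theta> * lp_deriv [l, 2, 2] \<theta>
           - (lp_deriv [l, 1, 2] \<theta> * lp_deriv [2, 1] \<theta> + lp_deriv [1, 2] \<theta> * lp_deriv [l, 2, 1] \<theta>)))
      / (hess_det \<theta> * hess_det \<theta>)) (at (comp l \<theta>))" (is "(_ has_real_derivative ?D) _")
    unfolding hess_inv_def \<sigma>_def[symmetric] using hess_det_nonzero[OF assms(1)]
    by (auto intro!: derivative_eq_intros lp_deriv_has_derivative[OF assms(1,2)]
        hess_det_has_derivative[OF assms(1,2)])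
  moreover have "?D = - (\<Sum>a\<in>idx. \<Sum>b\<in>idx. hess_inv s a \<theta> * lp_deriv [l, a, b] \<theta> * hess_inv b k \<theta>)"
  proof -
    have "lp_deriv [2, 1] \<theta> = lp_deriv [1, 2] \<theta>" "lp_deriv [l, 2, 1] \<theta> = lp_deriv [l, 1, 2] \<theta>"
      by (simp_all add: lp_deriv_def mult_ac)
    then show ?thesis
      using idx_cases[OF assms(3)] idx_cases[OF assms(4)] hess_det_nonzero[OF assms(1)]
      by (elim disjE; simp add: \<sigma>_def hess_inv_def idx_def field_simps;
          simp add: hess_det_def algebra_simps)
  qed
  ultimately show ?thesis
    by simp
qed


lemma pd_conn_up:
  assumes "\<theta> \<in> Theta" and "l \<in> idx" and "j \<in> idx" and "k \<in> idx" and "n \<in> idx"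
  shows "pd l (conn_up \<alpha> j k n) \<theta> = (1 - \<alpha>) / 2 * (\<Sum>s\<in>idx. lp_deriv [l, j, k, s] \<theta> * hess_inv s n \<theta>
      - lp_deriv [j, k, s] \<theta> * (\<Sum>a\<in>idx. \<Sum>b\<in>idx. hess_inv s a \<theta> * lp_deriv [l, a, b] \<theta> * hess_inv b n \<theta>))"
proof (rule pd_eqI[OF assms(1)])
  show "conn_up \<alpha> j k n \<eta> = (1 - \<alpha>) / 2 * (\<Sum>s\<in>idx. lp_deriv [j, k, s] \<eta> * hess_inv s n \<eta>)"
    if "\<eta> \<in> Theta" for \<eta>
    using conn_up_eq[OF that assms(3-5)] .
  show "((\<lambda>t. (1 - \<alpha>) / 2 * (\<Sum>s\<in>idx. lp_deriv [j, k, s] (upd l t \<theta>) * hess_inv s n (upd l t \<theta>)))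
      has_real_derivative (1 - \<alpha>) / 2 * (\<Sum>s\<in>idx. lp_deriv [l, j, k, s] \<theta> * hess_inv s n \<theta>
      - lp_deriv [j, k, s] \<theta> * (\<Sum>a\<in>idx. \<Sum>b\<in>idx. hess_inv s a \<theta> * lp_deriv [l, a, b] \<theta> * hess_inv b n \<theta>)))
    (at (comp l \<theta>))"
  proof (intro DERIV_cmult DERIV_sum)
    fix s :: nat
    assume "s \<in> idx"
    show "((\<lambda>t. lp_deriv [j, k, s] (upd l t \<theta>) * hess_inv s n (upd l t \<theta>)) has_real_derivative
        lp_deriv [l, j, k, s] \<theta> * hess_inv s n \<theta>
        - lp_deriv [j, k, s] \<theta> * (\<Sum>a\<in>idx. \<Sum>b\<in>idx. hess_inv s a \<theta> * lp_deriv [l, a, b] \<theta> * hess_inv b n \<theta>))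
      (at (comp l \<theta>))"
      by (auto intro!: derivative_eq_intros lp_deriv_has_derivative[OF assms(1,2)]
          hess_inv_has_derivative[OF assms(1,2) \<open>s \<in> idx\<close> assms(5)])
  qed
qed

lemma curv_up_eq:
  assumes "\<theta> \<in> Theta" and "i \<in> idx" and "j \<in> idx" and "k \<in> idx" and "n \<in> idx"
  shows "curv_up \<alpha> i j k n \<theta> = - (1 - \<alpha>\<^sup>2) / 4 *
    (\<Sum>s\<in>idx. \<Sum>a\<in>idx. \<Sum>b\<in>idx. lp_deriv [j, k, s] \<theta> * hess_inv s a \<theta> * lp_deriv [i, a, b] \<theta> * hess_inv b n \<theta>
        - lp_deriv [i, k, s] \<theta> * hess_inv s a \<theta> * lp_deriv [j, a, b] \<theta> * hess_inv b n \<theta>)"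
proof -
  have "(\<Sum>m\<in>idx. conn_up \<alpha> j k m \<theta> * conn_up \<alpha> i m n \<theta> - conn_up \<alpha> i k m \<theta> * conn_up \<alpha> j m n \<theta>)
     = (\<Sum>m\<in>idx. (1 - \<alpha>) / 2 * (\<Sum>s\<in>idx. lp_deriv [j, k, s] \<theta> * hess_inv s m \<theta>)
         * ((1 - \<alpha>) / 2 * (\<Sum>s\<in>idx. lp_deriv [i, m, s] \<theta> * hess_inv s n \<theta>))
       - (1 - \<alpha>) / 2 * (\<Sum>s\<in>idx. lp_deriv [i, k, s] \<theta> * hess_inv s m \<theta>)
         * ((1 - \<alpha>) / 2 * (\<Sum>s\<in>idx. lp_deriv [j, m, s] \<theta> * hess_inv s n \<theta>)))"
    using assms by (intro sum.cong refl) (simp add: conn_up_eq)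
  moreover have "lp_deriv (j # i # is) \<theta> = lp_deriv (i # j # is) \<theta>" for "is"
    by (rule lp_deriv_perm) simp
  ultimately show ?thesis
    unfolding curv_up_def pd_conn_up[OF assms(1,2,3,4,5)] pd_conn_up[OF assms(1,3,2,4,5)]
    by (simp add: idx_def power2_eq_square field_simps)
qed


lemma hess_inv_contract:
  assumes "\<theta> \<in> Theta" and "b \<in> idx" and "l \<in> idx"
  shows "(\<Sum>n\<in>idx. hess_inv b n \<theta> * lp_deriv [n, l] \<theta>) = (if b = l then 1 else 0)"
proof -
  have "lp_deriv [2, 1] \<theta> = lp_deriv [1, 2] \<theta>"
    by (simp add: lp_deriv_def mult_ac)
  then show ?thesis
    using idx_cases[OF assms(2)] idx_cases[OF assms(3)] hess_det_nonzero[OF assms(1)]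
    by (elim disjE; simp add: idx_def hess_inv_def field_simps; simp add: hess_det_def algebra_simps)
qed

lemma curv_eq:
  assumes "\<theta> \<in> Theta" and "i \<in> idx" and "j \<in> idx" and "k \<in> idx" and "l \<in> idx"
  shows "curv \<alpha> i j k l \<theta> = (1 - \<alpha>\<^sup>2) / 4 *
    (\<Sum>s\<in>idx. \<Sum>a\<in>idx. lp_deriv [i, k, s] \<theta> * hess_inv s a \<theta> * lp_deriv [j, a, l] \<theta>
        - lp_deriv [j, k, s] \<theta> * hess_inv s a \<theta> * lp_deriv [i, a, l] \<theta>)"
proof -
  define T where "T s a b = lp_deriv [j, k, s] \<theta> * hess_inv s a \<theta> * lp_deriv [i, a, b] \<theta>
    - lp_deriv [i, k, s] \<theta> * hess_inv s a \<theta> * lp_deriv [j, a, b] \<theta>" for s a b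
  have "curv \<alpha> i j k l \<theta> = (\<Sum>n\<in>idx. - (1 - \<alpha>\<^sup>2) / 4 *
      (\<Sum>s\<in>idx. \<Sum>a\<in>idx. \<Sum>b\<in>idx. T s a b * hess_inv b n \<theta>) * lp_deriv [n, l] \<theta>)"
    unfolding curv_def T_def using assms
    by (intro sum.cong refl) (simp add: curv_up_eq fisher_eq left_diff_distrib)
  also have "\<dots> = - (1 - \<alpha>\<^sup>2) / 4 *
      (\<Sum>s\<in>idx. \<Sum>a\<in>idx. \<Sum>b\<in>idx. T s a b * (\<Sum>n\<in>idx. hess_inv b n \<theta> * lp_deriv [n, l] \<theta>))"
    by (simp add: idx_def algebra_simps)
  also have "\<dots> = - (1 - \<alpha>\<^sup>2) / 4 *
      (\<Sum>s\<in>idx. \<Sum>a\<in>idx. \<Sum>b\<in>idx. T s a b * (if b = l then 1 else 0))"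
    using assms by (intro arg_cong[where f = "\<lambda>x. - (1 - \<alpha>\<^sup>2) / 4 * x"] sum.cong refl)
      (simp add: hess_inv_contract)
  also have "\<dots> = - (1 - \<alpha>\<^sup>2) / 4 * (\<Sum>s\<in>idx. \<Sum>a\<in>idx. T s a l)"
    using assms(5) by (auto simp: idx_def)
  finally show ?thesis
    unfolding T_def by (simp add: sum_subtractf field_simps)
qed


lemma hess_inv_sym: "hess_inv s a \<theta> = hess_inv a s \<theta>"
  unfolding hess_inv_def by (simp add: lp_deriv_swap)

lemma lp_deriv_swap_last: "lp_deriv [i, j, k] \<theta> = lp_deriv [i, k, j] \<theta>"
  by (rule lp_deriv_perm) (simp add: add_mset_commute)

lemma lp_contraction_sym:
  "(\<Sum>s\<in>idx. \<Sum>a\<in>idx. lp_deriv [i, l, s] \<theta> * hess_inv s a \<theta> * lp_deriv [j, a, k] \<theta>)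
   = (\<Sum>s\<in>idx. \<Sum>a\<in>idx. lp_deriv [j, k, s] \<theta> * hess_inv s a \<theta> * lp_deriv [i, a, l] \<theta>)"
  by (subst sum.swap, intro sum.cong refl)
    (simp add: lp_deriv_swap_last[of i l] lp_deriv_swap_last[of j _ k] hess_inv_sym mult_ac)

lemma curv_swap_first: "curv \<alpha> j i k l \<theta> = - curv \<alpha> i j k l \<theta>"
proof -
  have "curv_up \<alpha> j i k n \<theta> = - curv_up \<alpha> i j k n \<theta>" for n
    unfolding curv_up_def by (simp add: sum_subtractf)
  then show ?thesis
    unfolding curv_def by (simp add: sum_negf[symmetric])
qed

lemma curv_swap_last:
  assumes "\<theta> \<in> Theta" and "i \<in> idx" and "j \<in> idx" and "k \<in> idx" and "l \<in> idx"
  shows "curv \<alpha> i j l k \<theta> = - curv \<alpha> i j k l \<theta>"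
  unfolding curv_eq[OF assms] curv_eq[OF assms(1-3,5,4)] sum_subtractf
    lp_contraction_sym[of i l _ j k] lp_contraction_sym[of j l _ i k]
  by (simp add: algebra_simps)


lemma curv_cases:
  assumes "\<theta> \<in> Theta" and "i \<in> idx" and "j \<in> idx" and "k \<in> idx" and "l \<in> idx"
  shows "curv \<alpha> i j k l \<theta> =
    (if i = j \<or> k = l then 0 else if i = k then curv \<alpha> 1 2 1 2 \<theta> else - curv \<alpha> 1 2 1 2 \<theta>)"
proof -
  have "curv \<alpha> i i k l \<theta> = 0"
    using curv_swap_first[of \<alpha> i i k l \<theta>] by simp
  moreover have "curv \<alpha> i j k k \<theta> = 0"
    using curv_swap_last[OF assms(1-4) assms(4), of \<alpha>] by simp
  moreover have "curv \<alpha> 1 2 2 1 \<theta> = - curv \<alpha> 1 2 1 2 \<theta>"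
    using curv_swap_last[OF assms(1) one_in_idx two_in_idx one_in_idx two_in_idx] .
  moreover have "curv \<alpha> 2 1 k' l' \<theta> = - curv \<alpha> 1 2 k' l' \<theta>" for k' l'
    by (rule curv_swap_first)
  ultimately show ?thesis
    using idx_cases[OF assms(2)] idx_cases[OF assms(3)] idx_cases[OF assms(4)] idx_cases[OF assms(5)]
    by (elim disjE) simp_all
qed

lemma ricci_eq:
  assumes "\<theta> \<in> Theta" and "i \<in> idx" and "k \<in> idx"
  shows "ricci \<alpha> i k \<theta> = curv \<alpha> 1 2 1 2 \<theta> / fisher_det \<theta> * fisher i k \<theta>"
proof -
  have "ricci \<alpha> i k \<theta> = (\<Sum>j\<in>idx. \<Sum>l\<in>idx. (if i = j \<or> k = l then 0 else if i = k then curv \<alpha> 1 2 1 2 \<theta>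
      else - curv \<alpha> 1 2 1 2 \<theta>) * fisher_inv j l \<theta>)"
    unfolding ricci_def using assms by (intro sum.cong refl) (simp add: curv_cases)
  then show ?thesis
    using idx_cases[OF assms(2)] idx_cases[OF assms(3)]
    by (auto simp: idx_def fisher_inv_def fisher_sym[of 2 "Suc 0"])
qed

lemma scalar_curv_eq:
  assumes "\<theta> \<in> Theta"
  shows "scalar_curv \<alpha> \<theta> = 2 * curv \<alpha> 1 2 1 2 \<theta> / fisher_det \<theta>"
proof -
  have "scalar_curv \<alpha> \<theta> = curv \<alpha> 1 2 1 2 \<theta> / fisher_det \<theta> * (\<Sum>i\<in>idx. \<Sum>j\<in>idx. fisher i j \<theta> * fisher_inv i j \<theta>)"
    unfolding scalar_curv_def sum_distrib_left using assms by (intro sum.cong refl) (simp add: ricci_eq)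
  also have "(\<Sum>i\<in>idx. \<Sum>j\<in>idx. fisher i j \<theta> * fisher_inv i j \<theta>) = 2"
    using fisher_det_pos[OF assms]
    by (simp add: idx_def fisher_inv_def fisher_sym[of 2 "Suc 0"] field_simps)
      (simp add: fisher_det_def fisher_sym[of 2 "Suc 0"] algebra_simps)
  finally show ?thesis
    by simp
qed

section \<open>Closed forms in terms of polygamma values\<close>

lemma conn_polygamma:
  assumes "\<theta> \<in> Theta"
  defines "s \<equiv> Polygamma 2 (beta_a \<theta>)" and "u \<equiv> Polygamma 2 (beta_b \<theta>)" and "v \<equiv> Polygamma 2 (fst \<theta>)"
  shows "conn \<alpha> 1 1 1 \<theta> = (1 - \<alpha>) / 16 * (u + s - 8 * v)"
    and "conn \<alpha> 1 2 1 \<theta> = (1 - \<alpha>) / 16 * (u - s)" and "conn \<alpha> 1 1 2 \<theta> = (1 - \<alpha>) / 16 * (u - s)"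
    and "conn \<alpha> 2 1 1 \<theta> = (1 - \<alpha>) / 16 * (u - s)" and "conn \<alpha> 2 2 2 \<theta> = (1 - \<alpha>) / 16 * (u - s)"
    and "conn \<alpha> 1 2 2 \<theta> = (1 - \<alpha>) / 16 * (u + s)" and "conn \<alpha> 2 1 2 \<theta> = (1 - \<alpha>) / 16 * (u + s)"
    and "conn \<alpha> 2 2 1 \<theta> = (1 - \<alpha>) / 16 * (u + s)"
  unfolding s_def u_def v_def using assms(1)
  by (simp_all add: conn_eq lp_deriv_def d_beta_a_def d_beta_b_def d_fst_def numeral_2_eq_2 field_simps)

lemma fisher_polygamma:
  assumes "\<theta> \<in> Theta"
  defines "p \<equiv> Polygamma 1 (beta_a \<theta>)" and "q \<equiv> Polygamma 1 (beta_b \<theta>)" and "r \<equiv> Polygamma 1 (fst \<theta>)"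
  shows "fisher 1 1 \<theta> = (p + q - 4 * r) / 4" and "fisher 1 2 \<theta> = - (p - q) / 4"
    and "fisher 2 1 \<theta> = - (p - q) / 4" and "fisher 2 2 \<theta> = (p + q) / 4"
    and "fisher_det \<theta> = (p * q - r * (p + q)) / 4"
proof -
  show entries: "fisher 1 1 \<theta> = (p + q - 4 * r) / 4" "fisher 1 2 \<theta> = - (p - q) / 4"
    "fisher 2 1 \<theta> = - (p - q) / 4" "fisher 2 2 \<theta> = (p + q) / 4"
    unfolding p_def q_def r_def using assms(1)
    by (simp_all add: fisher_eq lp_deriv_def d_beta_a_def d_beta_b_def d_fst_def field_simps)
  show "fisher_det \<theta> = (p * q - r * (p + q)) / 4"
    unfolding fisher_det_def entries by (simp add: field_simps)
qed

lemma curv_1212_polygamma: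
  assumes "\<theta> \<in> Theta"
  defines "p \<equiv> Polygamma 1 (beta_a \<theta>)" and "q \<equiv> Polygamma 1 (beta_b \<theta>)" and "r \<equiv> Polygamma 1 (fst \<theta>)"
    and "s \<equiv> Polygamma 2 (beta_a \<theta>)" and "u \<equiv> Polygamma 2 (beta_b \<theta>)" and "v \<equiv> Polygamma 2 (fst \<theta>)"
  shows "curv \<alpha> 1 2 1 2 \<theta> = (1 - \<alpha>\<^sup>2) * (r * s * u - v * (q * s + p * u)) / (16 * (p * q - r * (p + q)))"
proof -
  have hess: "lp_deriv [1, 1] \<theta> = (p + q) / 4 - r" "lp_deriv [1, 2] \<theta> = (q - p) / 4"
    "lp_deriv [2, 1] \<theta> = (q - p) / 4" "lp_deriv [2, 2] \<theta> = (p + q) / 4"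
    unfolding p_def q_def r_def by (simp_all add: lp_deriv_def d_beta_a_def d_beta_b_def d_fst_def)
  have third: "lp_deriv [1, 1, 1] \<theta> = (s + u) / 8 - v" "lp_deriv [1, 1, 2] \<theta> = (u - s) / 8"
    "lp_deriv [1, 2, 1] \<theta> = (u - s) / 8" "lp_deriv [2, 1, 1] \<theta> = (u - s) / 8"
    "lp_deriv [1, 2, 2] \<theta> = (u + s) / 8" "lp_deriv [2, 1, 2] \<theta> = (u + s) / 8"
    "lp_deriv [2, 2, 1] \<theta> = (u + s) / 8" "lp_deriv [2, 2, 2] \<theta> = (u - s) / 8"
    unfolding s_def u_def v_def
    by (simp_all add: lp_deriv_def d_beta_a_def d_beta_b_def d_fst_def numeral_2_eq_2)
  have "p * q - r * (p + q) = 4 * hess_det \<theta>"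
    using fisher_polygamma(5)[OF assms(1)] fisher_det_eq[OF assms(1)] unfolding p_def q_def r_def by simp
  then show ?thesis
    using hess_det_nonzero[OF assms(1)]
    by (simp add: curv_eq[OF assms(1)] idx_def hess_inv_def
        hess[unfolded One_nat_def] third[unfolded One_nat_def]) (simp add: field_simps)
qed


lemma ricci_scalar_polygamma:
  assumes "\<theta> \<in> Theta"
  defines "p \<equiv> Polygamma 1 (beta_a \<theta>)" and "q \<equiv> Polygamma 1 (beta_b \<theta>)" and "r \<equiv> Polygamma 1 (fst \<theta>)"
    and "s \<equiv> Polygamma 2 (beta_a \<theta>)" and "u \<equiv> Polygamma 2 (beta_b \<theta>)" and "v \<equiv> Polygamma 2 (fst \<theta>)"
  defines "GG \<equiv> p * q - r * (p + q)" and "N \<equiv> r * s * u - v * (q * s + p * u)"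
  shows "ricci \<alpha> 1 1 \<theta> = (1 - \<alpha>\<^sup>2) * (p + q - 4 * r) * N / (16 * GG\<^sup>2)"
    and "ricci \<alpha> 1 2 \<theta> = - ((1 - \<alpha>\<^sup>2) * (p - q) * N / (16 * GG\<^sup>2))"
    and "ricci \<alpha> 2 1 \<theta> = - ((1 - \<alpha>\<^sup>2) * (p - q) * N / (16 * GG\<^sup>2))"
    and "ricci \<alpha> 2 2 \<theta> = (1 - \<alpha>\<^sup>2) * (p + q) * N / (16 * GG\<^sup>2)"
    and "scalar_curv \<alpha> \<theta> = 8 * curv \<alpha> 1 2 1 2 \<theta> / GG"
proof -
  note fisher = fisher_polygamma[OF assms(1), folded p_def q_def r_def, folded GG_def]
  have R: "curv \<alpha> 1 2 1 2 \<theta> = (1 - \<alpha>\<^sup>2) * N / (16 * GG)"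
    using curv_1212_polygamma[OF assms(1), of \<alpha>] unfolding assms(2-9) .
  have "GG \<noteq> 0"
    using fisher_det_pos[OF assms(1)] fisher(5) by simp
  then show "ricci \<alpha> 1 1 \<theta> = (1 - \<alpha>\<^sup>2) * (p + q - 4 * r) * N / (16 * GG\<^sup>2)"
    and "ricci \<alpha> 1 2 \<theta> = - ((1 - \<alpha>\<^sup>2) * (p - q) * N / (16 * GG\<^sup>2))"
    and "ricci \<alpha> 2 1 \<theta> = - ((1 - \<alpha>\<^sup>2) * (p - q) * N / (16 * GG\<^sup>2))"
    and "ricci \<alpha> 2 2 \<theta> = (1 - \<alpha>\<^sup>2) * (p + q) * N / (16 * GG\<^sup>2)"
    and "scalar_curv \<alpha> \<theta> = 8 * curv \<alpha> 1 2 1 2 \<theta> / GG"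
    unfolding ricci_eq[OF assms(1) one_in_idx one_in_idx] ricci_eq[OF assms(1) one_in_idx two_in_idx]
      ricci_eq[OF assms(1) two_in_idx one_in_idx] ricci_eq[OF assms(1) two_in_idx two_in_idx]
      scalar_curv_eq[OF assms(1)] R fisher
    by (simp_all add: power2_eq_square) (simp_all add: field_simps)
qed

theorem mainTheorem2:
  fixes \<theta> :: "real \<times> real" and \<alpha> :: real
  assumes "\<theta> \<in> Theta"
  defines "a \<equiv> (fst \<theta> - snd \<theta>) / 2" and "b \<equiv> (fst \<theta> + snd \<theta>) / 2"
  defines "p \<equiv> Polygamma 1 a" and "q \<equiv> Polygamma 1 b" and "r \<equiv> Polygamma 1 (fst \<theta>)"
      and "s \<equiv> Polygamma 2 a" and "u \<equiv> Polygamma 2 b" and "v \<equiv> Polygamma 2 (fst \<theta>)"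
  defines "GG \<equiv> p * q - r * (p + q)" and "N \<equiv> r * s * u - v * (q * s + p * u)"
  shows
    "conn \<alpha> 1 1 1 \<theta> = (1 - \<alpha>) / 16 * (u + s - 8 * v)
     \<and> conn \<alpha> 1 2 1 \<theta> = (1 - \<alpha>) / 16 * (u - s)
     \<and> conn \<alpha> 1 1 2 \<theta> = (1 - \<alpha>) / 16 * (u - s)
     \<and> conn \<alpha> 2 1 1 \<theta> = (1 - \<alpha>) / 16 * (u - s)
     \<and> conn \<alpha> 2 2 2 \<theta> = (1 - \<alpha>) / 16 * (u - s)
     \<and> conn \<alpha> 1 2 2 \<theta> = (1 - \<alpha>) / 16 * (u + s)
     \<and> conn \<alpha> 2 1 2 \<theta> = (1 - \<alpha>) / 16 * (u + s)
     \<and> conn \<alpha> 2 2 1 \<theta> = (1 - \<alpha>) / 16 * (u + s)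
     \<and> (\<forall>i\<in>idx. \<forall>j\<in>idx. \<forall>k\<in>idx. \<forall>l\<in>idx. (i = j \<or> k = l) \<longrightarrow> curv \<alpha> i j k l \<theta> = 0)
     \<and> curv \<alpha> 1 2 1 2 \<theta> = (1 - \<alpha>\<^sup>2) * N / (16 * GG)
     \<and> curv \<alpha> 2 1 2 1 \<theta> = (1 - \<alpha>\<^sup>2) * N / (16 * GG)
     \<and> - curv \<alpha> 1 2 2 1 \<theta> = (1 - \<alpha>\<^sup>2) * N / (16 * GG)
     \<and> - curv \<alpha> 2 1 1 2 \<theta> = (1 - \<alpha>\<^sup>2) * N / (16 * GG)
     \<and> ricci \<alpha> 1 1 \<theta> = (1 - \<alpha>\<^sup>2) * (p + q - 4 * r) * N / (16 * GG\<^sup>2)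
     \<and> ricci \<alpha> 1 2 \<theta> = - ((1 - \<alpha>\<^sup>2) * (p - q) * N / (16 * GG\<^sup>2))
     \<and> ricci \<alpha> 2 1 \<theta> = - ((1 - \<alpha>\<^sup>2) * (p - q) * N / (16 * GG\<^sup>2))
     \<and> ricci \<alpha> 2 2 \<theta> = (1 - \<alpha>\<^sup>2) * (p + q) * N / (16 * GG\<^sup>2)
     \<and> scalar_curv \<alpha> \<theta> = 8 * curv \<alpha> 1 2 1 2 \<theta> / GG
     \<and> scalar_curv \<alpha> \<theta> = 2 * (curv \<alpha> 1 2 1 2 \<theta> / fisher_det \<theta>)"
proof -
  have ab: "beta_a \<theta> = a" "beta_b \<theta> = b"
    by (simp_all add: a_def b_def beta_a_def beta_b_def)
  have "curv \<alpha> 1 2 2 1 \<theta> = - curv \<alpha> 1 2 1 2 \<theta>"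
    by (rule curv_swap_last[OF assms(1)]) simp_all
  moreover have "curv \<alpha> 2 1 k l \<theta> = - curv \<alpha> 1 2 k l \<theta>" for k l
    by (rule curv_swap_first)
  moreover have "\<forall>i\<in>idx. \<forall>j\<in>idx. \<forall>k\<in>idx. \<forall>l\<in>idx. (i = j \<or> k = l) \<longrightarrow> curv \<alpha> i j k l \<theta> = 0"
    by (auto simp del: mem_idx simp: curv_cases[OF assms(1)])
  ultimately show ?thesis
    using conn_polygamma[OF assms(1), of \<alpha>] curv_1212_polygamma[OF assms(1), of \<alpha>]
      ricci_scalar_polygamma[OF assms(1), of \<alpha>] scalar_curv_eq[OF assms(1), of \<alpha>]
    unfolding ab GG_def N_def p_def q_def r_def s_def u_def v_def by simp
qed

end
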